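(* Let $f:\mathcal{X}\to\Delta^{k-1}$ be a classifier outputting confidence vectors. Let $P_S$ and $P_T$ be source and target distributions over $\mathcal{X}\times\mathcal{Y}$ with $k$ classes, and write $P_S(y)$, $P_T(y)$ for the source and target label distributions, viewed as distributions over one-hot vectors $\{0,1\}^k\cap\Delta^{k-1}$. Let $f_\# P_T(c)$ be the distribution of $f(x)$ for $x\sim P_T(x)$, and let $P_{\mathrm{pseudo}}(y)$ be the distribution of the one-hot vector $e_{\arg\max_j f_j(x)}$ for $x\sim P_T(x)$. Define $\hat\epsilon_{\mathrm{COT}}=W_\infty\bigl(f_\# P_T(c),P_S(y)\bigr)$. If $P_T(y)=P_S(y)$, then $$\hat\epsilon_{\mathrm{COT}}\ \ge\ 0.5\,W_\infty\bigl(P_{\mathrm{pseudo}}(y),P_T(y)\bigr).$$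
   Context: $\Delta^{k-1}=\{c\in\mathbb{R}^k: c_j\ge 0,\ \sum_j c_j=1\}$; $e_i$ is the $i$-th standard basis vector. For probability distributions $P,Q$ on $\mathbb{R}^k$, $W_\infty(P,Q)=\inf_{\pi\in\Pi(P,Q)}\int\|u-v\|_\infty\,d\pi(u,v)$ over couplings $\pi$ of $P$ and $Q$ (optimal transport distance with ground cost $\|u-v\|_\infty$). Ties in $\arg\max$ are broken by a fixed rule (e.g. smallest index). *)

theory Defs
  imports "HOL-Probability.Probability"
begin

text \<open>Vectors in R^k are represented as real^'k, with the finite linearly ordered
  type 'k serving as the class index set {1..k}.\<close>

definition prob_simplex :: "(real ^ 'k::finite) set" where
  "prob_simplex = {c. (\<forall>j. c $ j \<ge> 0) \<and> (\<Sum>j\<in>UNIV. c $ j) = 1}"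

definition onehot :: "'k::finite \<Rightarrow> real ^ 'k" where
  "onehot i = (\<chi> j. if j = i then 1 else 0)"

definition linf_dist :: "real ^ 'k::finite \<Rightarrow> real ^ 'k \<Rightarrow> real" where
  "linf_dist u v = Max (range (\<lambda>j. \<bar>u $ j - v $ j\<bar>))"

definition argmax_idx :: "real ^ 'k::{finite,linorder} \<Rightarrow> 'k" where
  "argmax_idx c = (LEAST j. \<forall>i. c $ i \<le> c $ j)"

definition couplings :: "'a::topological_space measure \<Rightarrow> 'b::topological_space measure \<Rightarrow> ('a \<times> 'b) measure set" where
  "couplings P Q = {\<pi>. prob_space \<pi> \<and> sets \<pi> = sets (borel :: ('a \<times> 'b) measure)
      \<and> distr \<pi> borel fst = P \<and> distr \<pi> borel snd = Q}"

definition W_inf :: "(real ^ 'k::finite) measure \<Rightarrow> (real ^ 'k) measure \<Rightarrow> ennreal" where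
  "W_inf P Q = (INF \<pi>\<in>couplings P Q. \<integral>\<^sup>+ z. ennreal (linf_dist (fst z) (snd z)) \<partial>\<pi>)"

definition label_dist :: "('x \<times> 'k::finite) measure \<Rightarrow> (real ^ 'k) measure" where
  "label_dist P = distr P borel (\<lambda>p. onehot (snd p))"

definition push_conf :: "('x \<Rightarrow> real ^ 'k::finite) \<Rightarrow> ('x \<times> 'k) measure \<Rightarrow> (real ^ 'k) measure" where
  "push_conf f P = distr P borel (\<lambda>p. f (fst p))"

definition pseudo_dist
  where "pseudo_dist f P = distr P borel (\<lambda>p. onehot (argmax_idx (f (fst p))))"

end

theory Submission
  imports Defs
begin

(* Pushing a coupling of f#P_T and P_S(y) forward along c \<mapsto> e_(argmax c) in the first
   coordinate yields a coupling of P_pseudo(y) and P_S(y) = P_T(y).  The second marginal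
   lives on one-hot vectors, and the map at most doubles the sup-distance to each e_i:
   if argmax c = j \<noteq> i then c_i \<le> c_j, so |c_i - 1| + |c_j| \<ge> 1, whence
   \<parallel>c - e_i\<parallel> \<ge> 1/2 = \<parallel>e_j - e_i\<parallel> / 2. *)

lemma Least_eq_iff_finite:
  fixes P :: "'i::{finite,linorder} \<Rightarrow> bool"
  assumes "P i"
  shows "(LEAST i. P i) = j \<longleftrightarrow> P j \<and> (\<forall>i<j. \<not> P i)"
proof -
  have fin: "finite {i. P i}" "{i. P i} \<noteq> {}"
    using assms by auto
  have "(LEAST i. P i) = Min {i. P i}"
    using fin by (intro Least_Min) auto
  then show ?thesis
    using Min_eq_iff[OF fin, of j] by (auto simp: not_less[symmetric])
qed

lemma measurable_Least_finite[measurable]: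
  fixes P :: "'i::{finite,linorder} \<Rightarrow> 'a \<Rightarrow> bool"
  assumes [measurable]: "\<And>i. Measurable.pred M (P i)"
  shows "(\<lambda>x. LEAST i. P i x) \<in> measurable M (count_space UNIV)"
  unfolding measurable_count_space_eq2_countable
proof safe
  fix j :: 'i
  have "(\<lambda>x. LEAST i. P i x) -` {j} \<inter> space M =
      {x \<in> space M. if \<exists>i. P i x then P j x \<and> (\<forall>i<j. \<not> P i x) else (LEAST i::'i. False) = j}"
  proof (intro set_eqI)
    fix x
    show "x \<in> (\<lambda>x. LEAST i. P i x) -` {j} \<inter> space M \<longleftrightarrow>
        x \<in> {x \<in> space M. if \<exists>i. P i x then P j x \<and> (\<forall>i<j. \<not> P i x) else (LEAST i::'i. False) = j}"
      by (cases "\<exists>i. P i x") (use Least_eq_iff_finite[of "\<lambda>i. P i x"] in auto)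
  qed
  then show "(\<lambda>x. LEAST i. P i x) -` {j} \<inter> space M \<in> sets M"
    by simp
qed simp

lemma argmax_idx_ge: "c $ i \<le> c $ argmax_idx c"
proof -
  have "Max (range (($) c)) \<in> range (($) c)"
    by (rule Max_in) auto
  then obtain j where "c $ j = Max (range (($) c))"
    by (metis imageE)
  then have j: "\<forall>i. c $ i \<le> c $ j"
    by simp
  show ?thesis
    using Least_eq_iff_finite[of "\<lambda>j. \<forall>i. c $ i \<le> c $ j", OF j]
    unfolding argmax_idx_def by blast
qed

lemma measurable_argmax_idx[measurable]:
  "argmax_idx \<in> measurable borel (count_space UNIV)"
  unfolding argmax_idx_def by measurable
lemma borel_measurable_linf_dist[measurable (raw)]:
  assumes "f \<in> borel_measurable M" "g \<in> borel_measurable M"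
  shows "(\<lambda>x. linf_dist (f x) (g x)) \<in> borel_measurable M"
  unfolding linf_dist_def
  by (intro borel_measurable_Max borel_measurable_abs borel_measurable_diff
      measurable_compose[OF assms(1) borel_measurable_nth]
      measurable_compose[OF assms(2) borel_measurable_nth]) auto

lemma linf_dist_nonneg: "0 \<le> linf_dist u v"
  unfolding linf_dist_def by (rule order_trans[OF abs_ge_zero Max_ge]) auto

lemma linf_dist_onehot_le_twice:
  assumes "c $ i \<le> c $ j"
  shows "linf_dist (onehot j) (onehot i) \<le> 2 * linf_dist c (onehot i)"
proof (cases "j = i")
  case True
  then have "linf_dist (onehot j) (onehot i) = 0"
    by (simp add: linf_dist_def)
  then show ?thesis
    using linf_dist_nonneg[of c "onehot i"] by simp
next
  case False
  have "linf_dist (onehot j) (onehot i) \<le> 1"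
    unfolding linf_dist_def onehot_def by (auto intro!: Max.boundedI)
  moreover have "\<bar>c $ i - 1\<bar> \<le> linf_dist c (onehot i)" "\<bar>c $ j - 0\<bar> \<le> linf_dist c (onehot i)"
    unfolding linf_dist_def onehot_def using False by (auto intro!: Max_ge)
  ultimately show ?thesis
    using assms by linarith
qed

lemma measurable_coupling:
  fixes \<pi> :: "('a::second_countable_topology \<times> 'b::second_countable_topology) measure"
    and f :: "'a \<times> 'b \<Rightarrow> 'c"
  assumes "\<pi> \<in> couplings P Q" "f \<in> measurable (borel \<Otimes>\<^sub>M borel) N"
  shows "f \<in> measurable \<pi> N"
proof -
  have "sets \<pi> = sets (borel \<Otimes>\<^sub>M borel)"
    unfolding borel_prod using assms(1) by (simp add: couplings_def)
  then show ?thesis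
    using assms(2) by (simp cong: measurable_cong_sets)
qed

lemma borel_measurable_fst_snd[measurable]:
  "fst \<in> borel_measurable (borel :: ('a::topological_space \<times> 'b::topological_space) measure)"
  "snd \<in> borel_measurable (borel :: ('a::topological_space \<times> 'b::topological_space) measure)"
  by (intro borel_measurable_continuous_onI continuous_on_fst continuous_on_snd continuous_on_id)+

lemma measurable_map_fst_coupling:
  fixes \<pi> :: "('a::second_countable_topology \<times> 'b::second_countable_topology) measure"
    and g :: "'a \<Rightarrow> 'c::second_countable_topology"
  assumes \<pi>: "\<pi> \<in> couplings P Q" and [measurable]: "g \<in> borel_measurable borel"
  shows "(\<lambda>z. (g (fst z), snd z)) \<in> borel_measurable \<pi>"
proof -
  have "(\<lambda>z. (g (fst z), snd z)) \<in> measurable \<pi> (borel \<Otimes>\<^sub>M borel)"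
    by (rule measurable_coupling[OF \<pi>]) measurable
  then show ?thesis
    by (simp only: borel_prod)
qed

lemma distr_map_fst_in_couplings:
  fixes \<pi> :: "('a::second_countable_topology \<times> 'b::second_countable_topology) measure"
    and g :: "'a \<Rightarrow> 'c::second_countable_topology"
  assumes \<pi>: "\<pi> \<in> couplings P Q" and g[measurable]: "g \<in> borel_measurable borel"
  shows "distr \<pi> borel (\<lambda>z. (g (fst z), snd z)) \<in> couplings (distr P borel g) Q"
proof -
  have [measurable]: "fst \<in> borel_measurable \<pi>" "snd \<in> borel_measurable \<pi>"
    "(\<lambda>z. (g (fst z), snd z)) \<in> borel_measurable \<pi>"
    by (rule measurable_coupling[OF \<pi> measurable_fst] measurable_coupling[OF \<pi> measurable_snd]
        measurable_map_fst_coupling[OF \<pi> g])+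
  have "distr (distr \<pi> borel (\<lambda>z. (g (fst z), snd z))) borel fst = distr \<pi> borel (g \<circ> fst)"
    by (subst distr_distr) (simp_all add: comp_def)
  also have "\<dots> = distr (distr \<pi> borel fst) borel g"
    by (subst distr_distr) measurable
  moreover have "distr (distr \<pi> borel (\<lambda>z. (g (fst z), snd z))) borel snd = distr \<pi> borel snd"
    by (subst distr_distr) (simp_all add: comp_def)
  ultimately show ?thesis
    using \<pi> by (auto simp: couplings_def intro: prob_space.prob_space_distr)
qed

lemma W_inf_distr_le:
  fixes g :: "real ^ 'k::finite \<Rightarrow> real ^ 'k"
  assumes g[measurable]: "g \<in> borel_measurable borel"
    and "AE v in Q. v \<in> A"
    and contraction: "\<And>u v. v \<in> A \<Longrightarrow> a * linf_dist (g u) v \<le> linf_dist u v"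
  shows "ennreal a * W_inf (distr P borel g) Q \<le> W_inf P Q"
  unfolding W_inf_def
proof (rule INF_greatest)
  fix \<pi> assume \<pi>: "\<pi> \<in> couplings P Q"
  let ?h = "\<lambda>z. (g (fst z), snd z)"
  have [measurable]: "fst \<in> borel_measurable \<pi>" "snd \<in> borel_measurable \<pi>"
    "?h \<in> borel_measurable \<pi>"
    by (rule measurable_coupling[OF \<pi> measurable_fst] measurable_coupling[OF \<pi> measurable_snd]
        measurable_map_fst_coupling[OF \<pi> g])+
  have "distr \<pi> borel snd = Q"
    using \<pi> by (simp add: couplings_def)
  then have "AE v in distr \<pi> borel snd. v \<in> A"
    using assms(2) by metis
  then have A: "AE z in \<pi>. snd z \<in> A"
    by (rule AE_distrD[rotated]) measurable
  have "ennreal a * (INF \<sigma>\<in>couplings (distr P borel g) Q. \<integral>\<^sup>+ z. linf_dist (fst z) (snd z) \<partial>\<sigma>)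
      \<le> ennreal a * \<integral>\<^sup>+ z. linf_dist (fst z) (snd z) \<partial>distr \<pi> borel ?h"
    using \<pi> by (intro mult_left_mono INF_lower distr_map_fst_in_couplings) auto
  also have "\<dots> = \<integral>\<^sup>+ z. ennreal a * linf_dist (g (fst z)) (snd z) \<partial>\<pi>"
    by (simp add: nn_integral_distr nn_integral_cmult)
  also have "\<dots> \<le> \<integral>\<^sup>+ z. linf_dist (fst z) (snd z) \<partial>\<pi>"
    using A
  proof (intro nn_integral_mono_AE, eventually_elim)
    case (elim z)
    then have "a * linf_dist (g (fst z)) (snd z) \<le> linf_dist (fst z) (snd z)"
      by (simp add: contraction)
    then show ?case
      using ennreal_leI by (metis ennreal_mult'' linf_dist_nonneg)
  qed
  finally show "ennreal a * (INF \<sigma>\<in>couplings (distr P borel g) Q. \<integral>\<^sup>+ z. linf_dist (fst z) (snd z) \<partial>\<sigma>)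
      \<le> \<integral>\<^sup>+ z. linf_dist (fst z) (snd z) \<partial>\<pi>" .
qed

lemma pseudo_dist_eq_distr_push_conf:
  assumes "(\<lambda>p. f (fst p)) \<in> borel_measurable P"
  shows "pseudo_dist f P = distr (push_conf f P) borel (\<lambda>c. onehot (argmax_idx c))"
proof -
  have "distr (push_conf f P) borel (\<lambda>c. onehot (argmax_idx c))
      = distr P borel ((\<lambda>c. onehot (argmax_idx c)) \<circ> (\<lambda>p. f (fst p)))"
    unfolding push_conf_def using assms by (intro distr_distr) measurable
  then show ?thesis
    by (simp add: pseudo_dist_def comp_def)
qed

lemma AE_label_dist_onehot:
  assumes "snd \<in> measurable P (count_space UNIV)"
  shows "AE v in label_dist P. v \<in> range onehot"
proof -
  have "range onehot \<in> sets (borel :: (real ^ 'k::finite) measure)"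
    by (intro borel_closed finite_imp_closed) simp
  moreover have "(\<lambda>p. onehot (snd p)) \<in> borel_measurable P"
    using assms by measurable
  ultimately show ?thesis
    unfolding label_dist_def by (subst AE_distr_iff) auto
qed

theorem mainTheorem3:
  fixes f :: "'x \<Rightarrow> real ^ 'k::{finite,linorder}"
    and P_S P_T :: "('x \<times> 'k) measure"
  assumes "prob_space P_S" and "prob_space P_T"
    and "snd \<in> measurable P_S (count_space UNIV)"
    and "snd \<in> measurable P_T (count_space UNIV)"
    and "fst \<in> measurable P_T X"
    and "f \<in> borel_measurable X"
    and "\<forall>x. f x \<in> prob_simplex"
    and "label_dist P_T = label_dist P_S"
  shows "W_inf (push_conf f P_T) (label_dist P_S)
           \<ge> ennreal 0.5 * W_inf (pseudo_dist f P_T) (label_dist P_T)"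
proof -
  have "(\<lambda>p. f (fst p)) \<in> borel_measurable P_T"
    using measurable_compose[OF assms(5,6)] .
  then have pseudo: "pseudo_dist f P_T = distr (push_conf f P_T) borel (\<lambda>c. onehot (argmax_idx c))"
    by (rule pseudo_dist_eq_distr_push_conf)
  have "0.5 * linf_dist (onehot (argmax_idx c)) v \<le> linf_dist c v" if v: "v \<in> range onehot" for c v
  proof -
    obtain i where "v = onehot i"
      using v by blast
    then show ?thesis
      using linf_dist_onehot_le_twice[OF argmax_idx_ge, of c i] by simp
  qed
  then show ?thesis
    unfolding pseudo assms(8)
    using AE_label_dist_onehot[OF assms(3)] by (intro W_inf_distr_le) auto
qed

end
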